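(* If $P\in k(t)\langle\partial_t\rangle$ is irreducible in $k(t)\langle\partial_t\rangle$, then $P$ is irreducible in $K\langle\partial_t\rangle$, i.e. $P$ has no right-hand factor $Q\in K\langle\partial_t\rangle$ with $1\le{\rm ord}(Q)<{\rm ord}(P)$.
   Context: $k$ is an algebraically closed field of characteristic zero and $K=k(t,x_1,\dots,x_n)$; $K\langle\partial_t\rangle$ (resp. $k(t)\langle\partial_t\rangle$) is the ring of linear differential operators in $\partial_t=\partial/\partial t$ with coefficients in $K$ (resp. $k(t)$). An operator of positive order is irreducible if it has no right-hand factor of order strictly between $0$ and its own order. *)

theory Defs
  imports "HOL-Computational_Algebra.Polynomial" "HOL-Computational_Algebra.Fraction_Field"
          "HOL-Library.Poly_Mapping"
begin

text \<open>K = k(t,x_1,...,x_n) is modelled as F(t) where F = k(x_1,...,x_n) is the fraction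
 field of the multivariate polynomial ring over k in the variables of the finite type 'v
 (monomials are finitely supported exponent maps 'v =>0 nat).\<close>

type_synonym ('v, 'k) mpoly_field = "((('v \<Rightarrow>\<^sub>0 nat) \<Rightarrow>\<^sub>0 'k) fract)"
type_synonym 'a ratfun = "'a poly fract"

definition alg_closed :: "'k::field itself \<Rightarrow> bool" where
  "alg_closed _ \<longleftrightarrow> (\<forall>p :: 'k poly. degree p > 0 \<longrightarrow> (\<exists>x. poly p x = 0))"

lift_definition ratfun_deriv :: "'a::idom ratfun \<Rightarrow> 'a ratfun"
  is "\<lambda>(a, b). (pderiv a * b - a * pderiv b, b * b)"
proof -
  fix x y :: "'a poly \<times> 'a poly"
  assume "fractrel x y"
  then obtain a b c d where xy: "x = (a, b)" "y = (c, d)" and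
    nz: "b \<noteq> 0" "d \<noteq> 0" and eq: "a * d = c * b"
    by (cases x, cases y) auto
  have deq: "pderiv a * d + a * pderiv d = pderiv c * b + c * pderiv b"
    using arg_cong[OF eq, of pderiv] by (simp add: pderiv_mult algebra_simps)
  have "(pderiv a * b - a * pderiv b) * (d * d) = (pderiv c * d - c * pderiv d) * (b * b)"
  proof -
    have "(pderiv c * d - c * pderiv d) * (b * b)
        = (pderiv c * b) * (b * d) - (c * b) * (b * pderiv d)" by (simp add: algebra_simps)
    also have "\<dots> = (pderiv a * d + a * pderiv d - c * pderiv b) * (b * d) - (a * d) * (b * pderiv d)"
      using deq eq by (simp add: algebra_simps)
    also have "\<dots> = pderiv a * b * (d * d) - (c * b) * (d * pderiv b)"
      by (simp add: algebra_simps)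
    also have "\<dots> = (pderiv a * b - a * pderiv b) * (d * d)"
      using eq by (simp add: algebra_simps)
    finally show ?thesis by simp
  qed
  then show "fractrel ((\<lambda>(a, b). (pderiv a * b - a * pderiv b, b * b)) x)
                      ((\<lambda>(a, b). (pderiv a * b - a * pderiv b, b * b)) y)"
    using xy nz by simp
qed

definition const_mpf :: "'k::field \<Rightarrow> ('v::linorder, 'k) mpoly_field" where
  "const_mpf c = Fract (Poly_Mapping.single 0 c) 1"

definition embed_ratfun :: "'k::field ratfun \<Rightarrow> ('v::linorder, 'k) mpoly_field ratfun" where
  "embed_ratfun r = (let (a, b) = (SOME (a, b). b \<noteq> 0 \<and> r = Fract a b)
     in Fract (map_poly const_mpf a) (map_poly const_mpf b))"

text \<open>An operator  sum_i a_i \<partial>^i  with coefficients in a differential ring (R, D)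
 is represented by the polynomial with coefficients a_i (coefficients on the left);
 the order is the degree.  The (noncommutative) product is given by the Leibniz rule
 \<partial>^i b = sum_l (i choose l) D^l(b) \<partial>^(i-l).\<close>

definition op_mult :: "('a::comm_ring_1 \<Rightarrow> 'a) \<Rightarrow> 'a poly \<Rightarrow> 'a poly \<Rightarrow> 'a poly" where
  "op_mult D P Q = (\<Sum>i\<le>degree P. \<Sum>l\<le>i.
      smult (coeff P i * of_nat (i choose l)) (map_poly (D ^^ l) Q * monom 1 (i - l)))"

definition right_factor :: "('a::comm_ring_1 \<Rightarrow> 'a) \<Rightarrow> 'a poly \<Rightarrow> 'a poly \<Rightarrow> bool" where
  "right_factor D Q P \<longleftrightarrow> (\<exists>L. P = op_mult D L Q)"

definition irreducible_op :: "('a::comm_ring_1 \<Rightarrow> 'a) \<Rightarrow> 'a poly \<Rightarrow> bool" where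
  "irreducible_op D P \<longleftrightarrow> 0 < degree P \<and>
     \<not> (\<exists>Q. 1 \<le> degree Q \<and> degree Q < degree P \<and> right_factor D Q P)"

end

theory Submission
  imports Defs "HOL-Computational_Algebra.Polynomial_Factorial"
begin

text \<open>A right factorisation of P over K = k(x_1,...,x_n)(t) involves only finitely many
  coefficients. Writing each of them as a quotient of polynomials in t over k[x_1,...,x_n], we pick
  a point c in k^n at which none of the finitely many relevant leading coefficients vanishes; it
  exists because k is infinite (a Kronecker substitution reduces this to univariate polynomials).
  Substituting x := c is a homomorphism of differential rings on the fractions whose denominator
  survives it, and it fixes k(t). It therefore maps the factorisation to one of P over k(t) whose
  right factor has the same order.\<close>

definition eval_monomial :: "('v::finite \<Rightarrow> 'k::comm_ring_1) \<Rightarrow> ('v \<Rightarrow>\<^sub>0 nat) \<Rightarrow> 'k" where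
  "eval_monomial c m = (\<Prod>v\<in>UNIV. c v ^ Poly_Mapping.lookup m v)"

definition eval_mpoly :: "('v::finite \<Rightarrow> 'k::comm_ring_1) \<Rightarrow> (('v \<Rightarrow>\<^sub>0 nat) \<Rightarrow>\<^sub>0 'k) \<Rightarrow> 'k" where
  "eval_mpoly c p = (\<Sum>m\<in>Poly_Mapping.keys p. Poly_Mapping.lookup p m * eval_monomial c m)"

lemma eval_monomial_0 [simp]: "eval_monomial c 0 = 1"
  by (simp add: eval_monomial_def)

lemma eval_monomial_add: "eval_monomial c (m + n) = eval_monomial c m * eval_monomial c n"
  by (simp add: eval_monomial_def lookup_add power_add prod.distrib)

lemma eval_mpoly_superset:
  assumes "finite S" "Poly_Mapping.keys p \<subseteq> S"
  shows "eval_mpoly c p = (\<Sum>m\<in>S. Poly_Mapping.lookup p m * eval_monomial c m)"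
  unfolding eval_mpoly_def by (rule sum.mono_neutral_left[OF assms]) (auto simp: in_keys_iff)

lemma eval_mpoly_0 [simp]: "eval_mpoly c 0 = 0"
  by (simp add: eval_mpoly_def)

lemma eval_mpoly_single [simp]: "eval_mpoly c (Poly_Mapping.single m a) = a * eval_monomial c m"
  by (simp add: eval_mpoly_def)

lemma eval_mpoly_1 [simp]: "eval_mpoly c 1 = 1"
  using eval_mpoly_single[of c 0 1] by simp

lemma eval_mpoly_add: "eval_mpoly c (p + q) = eval_mpoly c p + eval_mpoly c q"
proof -
  let ?S = "Poly_Mapping.keys p \<union> Poly_Mapping.keys q"
  have "eval_mpoly c (p + q) = (\<Sum>m\<in>?S. Poly_Mapping.lookup (p + q) m * eval_monomial c m)"
    using keys_add[of p q] by (intro eval_mpoly_superset) auto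
  also have "\<dots> = (\<Sum>m\<in>?S. Poly_Mapping.lookup p m * eval_monomial c m)
                 + (\<Sum>m\<in>?S. Poly_Mapping.lookup q m * eval_monomial c m)"
    by (simp add: lookup_add distrib_right sum.distrib)
  also have "\<dots> = eval_mpoly c p + eval_mpoly c q"
    by (subst (1 2) eval_mpoly_superset[of ?S]) auto
  finally show ?thesis .
qed

lemma eval_mpoly_uminus: "eval_mpoly c (- p) = - eval_mpoly c p"
  using eval_mpoly_add[of c "- p" p] by (simp add: add_eq_0_iff2)

lemma eval_mpoly_diff: "eval_mpoly c (p - q) = eval_mpoly c p - eval_mpoly c q"
  using eval_mpoly_add[of c p "- q"] by (simp add: eval_mpoly_uminus)

lemma eval_mpoly_sum: "eval_mpoly c (sum f A) = (\<Sum>x\<in>A. eval_mpoly c (f x))"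
  by (induction A rule: infinite_finite_induct) (simp_all add: eval_mpoly_add)

lemma eval_mpoly_of_nat [simp]: "eval_mpoly c (of_nat n) = of_nat n"
  by (induction n) (simp_all add: eval_mpoly_add)

lemma update_eq_add_single:
  "a \<notin> Poly_Mapping.keys f \<Longrightarrow> Poly_Mapping.update a b f = f + Poly_Mapping.single a b"
  by (rule poly_mapping_eqI) (auto simp: lookup_update lookup_add lookup_single in_keys_iff)

lemma eval_mpoly_single_mult:
  "eval_mpoly c (Poly_Mapping.single m a * q) = a * eval_monomial c m * eval_mpoly c q"
proof (induction q rule: update_induct)
  case (update f x y)
  then have "Poly_Mapping.single m a * Poly_Mapping.update x y f
      = Poly_Mapping.single m a * f + Poly_Mapping.single (m + x) (a * y)"
    by (simp add: update_eq_add_single distrib_left mult_single)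
  with update show ?case
    by (simp add: update_eq_add_single eval_mpoly_add eval_monomial_add distrib_left mult_ac)
qed simp

lemma eval_mpoly_mult: "eval_mpoly c (p * q) = eval_mpoly c p * eval_mpoly c q"
proof (induction p rule: update_induct)
  case (update f x y)
  then show ?case
    by (simp add: update_eq_add_single distrib_right eval_mpoly_add eval_mpoly_single_mult)
qed simp

lemma eval_mpoly_prod: "eval_mpoly c (prod f A) = (\<Prod>x\<in>A. eval_mpoly c (f x))"
  by (induction A rule: infinite_finite_induct) (simp_all add: eval_mpoly_mult)

lemma base_expansion_inj:
  fixes d d' :: "nat \<Rightarrow> nat"
  assumes "\<forall>i<n. d i < N" "\<forall>i<n. d' i < N" "(\<Sum>i<n. d i * N ^ i) = (\<Sum>i<n. d' i * N ^ i)"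
  shows "\<forall>i<n. d i = d' i"
  using assms
proof (induction n arbitrary: d d')
  case (Suc n)
  have split: "(\<Sum>i<Suc n. f i * N ^ i) = f 0 + N * (\<Sum>i<n. f (Suc i) * N ^ i)" for f
    by (subst sum.lessThan_Suc_shift) (simp add: sum_distrib_left mult_ac)
  have eq: "d 0 + N * (\<Sum>i<n. d (Suc i) * N ^ i) = d' 0 + N * (\<Sum>i<n. d' (Suc i) * N ^ i)"
    using Suc.prems(3) by (simp only: split)
  have "d 0 < N" "d' 0 < N" using Suc.prems(1,2) by auto
  then have lowest: "d 0 = d' 0"
    using arg_cong[OF eq, of "\<lambda>x. x mod N"] by simp
  with eq \<open>d 0 < N\<close> have "(\<Sum>i<n. d (Suc i) * N ^ i) = (\<Sum>i<n. d' (Suc i) * N ^ i)"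
    by simp
  with Suc.prems(1,2) have "\<forall>i<n. d (Suc i) = d' (Suc i)"
    by (intro Suc.IH) auto
  with lowest show ?case by (auto simp: less_Suc_eq_0_disj)
qed simp

lemma kronecker_exponent_inj:
  assumes "bij_betw h {..<n} (UNIV :: 'v set)"
  shows "inj_on (\<lambda>m. \<Sum>i<n. Poly_Mapping.lookup m (h i) * N ^ i)
           {m :: 'v \<Rightarrow>\<^sub>0 nat. \<forall>v. Poly_Mapping.lookup m v < N}"
proof (rule inj_onI)
  fix m m' :: "'v \<Rightarrow>\<^sub>0 nat"
  assume "m \<in> {m. \<forall>v. Poly_Mapping.lookup m v < N}" "m' \<in> {m. \<forall>v. Poly_Mapping.lookup m v < N}"
    and "(\<Sum>i<n. Poly_Mapping.lookup m (h i) * N ^ i) = (\<Sum>i<n. Poly_Mapping.lookup m' (h i) * N ^ i)"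
  then have "\<forall>i<n. Poly_Mapping.lookup m (h i) = Poly_Mapping.lookup m' (h i)"
    by (intro base_expansion_inj) auto
  moreover have "\<forall>v. \<exists>i<n. v = h i"
    using assms unfolding bij_betw_def by auto
  ultimately show "m = m'"
    by (metis poly_mapping_eqI)
qed

lemma eval_mpoly_nonzero_somewhere:
  fixes p :: "('v::finite \<Rightarrow>\<^sub>0 nat) \<Rightarrow>\<^sub>0 'k::idom"
  assumes "infinite (UNIV :: 'k set)" "p \<noteq> 0"
  obtains c where "eval_mpoly c p \<noteq> 0"
proof -
  define n where "n = card (UNIV :: 'v set)"
  obtain h where h: "bij_betw h {..<n} (UNIV :: 'v set)"
    using ex_bij_betw_nat_finite[of "UNIV :: 'v set"] unfolding n_def atLeast0LessThan by auto
  define N where "N = Suc (Max ((\<lambda>(m, v). Poly_Mapping.lookup m v) ` (Poly_Mapping.keys p \<times> UNIV)))"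
  have keys_bounded: "Poly_Mapping.keys p \<subseteq> {m. \<forall>v. Poly_Mapping.lookup m v < N}"
    unfolding N_def by (force intro: le_imp_less_Suc Max_ge)
  define wt where "wt m = (\<Sum>i<n. Poly_Mapping.lookup m (h i) * N ^ i)" for m :: "'v \<Rightarrow>\<^sub>0 nat"
  have inj: "inj_on wt (Poly_Mapping.keys p)"
    unfolding wt_def by (rule inj_on_subset[OF kronecker_exponent_inj[OF h] keys_bounded])
  \<comment> \<open>Kronecker substitution: x_(h i) \<mapsto> s^(N^i) turns p into a nonzero univariate polynomial.\<close>
  define g where "g = (\<Sum>m\<in>Poly_Mapping.keys p. monom (Poly_Mapping.lookup p m) (wt m))"
  obtain m0 where m0: "m0 \<in> Poly_Mapping.keys p"
    using assms(2) by (metis all_not_in_conv keys_eq_empty)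
  have "coeff g (wt m0) = (\<Sum>m\<in>Poly_Mapping.keys p. if m = m0 then Poly_Mapping.lookup p m else 0)"
    unfolding g_def coeff_sum coeff_monom
    by (rule sum.cong) (use inj m0 in \<open>auto dest: inj_onD\<close>)
  also have "\<dots> \<noteq> 0" using m0 by (simp add: in_keys_iff)
  finally have "g \<noteq> 0" by auto
  then have "{s. poly g s = 0} \<noteq> UNIV"
    using poly_roots_finite assms(1) by metis
  then obtain s where s: "poly g s \<noteq> 0"
    by auto
  define c where "c v = s ^ (N ^ inv_into {..<n} h v)" for v
  have "eval_monomial c m = s ^ wt m" for m
  proof -
    have "eval_monomial c m = (\<Prod>i<n. c (h i) ^ Poly_Mapping.lookup m (h i))"
      unfolding eval_monomial_def by (rule prod.reindex_bij_betw[OF h, symmetric])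
    also have "\<dots> = (\<Prod>i<n. s ^ (Poly_Mapping.lookup m (h i) * N ^ i))"
      using h by (intro prod.cong) (auto simp: c_def bij_betw_def power_mult[symmetric] mult.commute)
    also have "\<dots> = s ^ wt m" unfolding wt_def by (simp add: power_sum)
    finally show ?thesis .
  qed
  then have "eval_mpoly c p = poly g s"
    unfolding eval_mpoly_def g_def by (simp add: poly_sum poly_monom)
  with s show ?thesis by (intro that[of c]) simp
qed

lemma Fract_eq_0_iff: "b \<noteq> 0 \<Longrightarrow> Fract a b = 0 \<longleftrightarrow> a = 0"
  by (simp add: Zero_fract_def eq_fract)

lemma to_fract_of_nat [simp]: "to_fract (of_nat n) = of_nat n"
  by (simp add: to_fract_def of_nat_fract)

lemma fract_poly_pderiv: "fract_poly (pderiv p) = pderiv (fract_poly p)"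
  by (rule poly_eqI) (simp add: coeff_map_poly coeff_pderiv)

lemma fract_poly_clear_denominators:
  fixes p :: "'a::idom fract poly"
  obtains a d where "d \<noteq> 0" "smult (to_fract d) p = fract_poly a"
proof (induction p arbitrary: thesis)
  case 0
  show ?case by (rule 0[of 1 0]) simp_all
next
  case (pCons x p)
  obtain a d where ad: "d \<noteq> 0" "smult (to_fract d) p = fract_poly a"
    using pCons.IH by blast
  obtain u v where x: "x = Fract u v" "v \<noteq> 0"
    by (cases x) auto
  have "to_fract (v * d) * x = to_fract (u * d)"
    using x by (simp add: to_fract_def eq_fract algebra_simps)
  with ad have "smult (to_fract (v * d)) (pCons x p) = fract_poly (pCons (u * d) (smult v a))"
    by (simp add: map_poly_pCons flip: smult_smult)
  with ad x show ?case
    by (intro pCons.prems[of "v * d"]) simp_all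
qed

lemma fract_fract_poly_cases:
  fixes f :: "'a::idom fract poly fract"
  obtains a b where "b \<noteq> 0" "f = Fract (fract_poly a) (fract_poly b)"
proof -
  obtain p q where f: "f = Fract p q" "q \<noteq> 0"
    by (cases f) auto
  obtain a dp where a: "dp \<noteq> 0" "smult (to_fract dp) p = fract_poly a"
    by (rule fract_poly_clear_denominators)
  obtain b dq where b: "dq \<noteq> 0" "smult (to_fract dq) q = fract_poly b"
    by (rule fract_poly_clear_denominators)
  have "f = Fract ([:to_fract (dp * dq):] * p) ([:to_fract (dp * dq):] * q)"
    using f a b by (subst mult_fract_cancel) simp_all
  also have "\<dots> = Fract (fract_poly (smult dq a)) (fract_poly (smult dp b))"
    using a b by (simp flip: a(2) b(2) add: mult_ac)
  finally have "f = Fract (fract_poly (smult dq a)) (fract_poly (smult dp b))" .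
  moreover have "smult dp b \<noteq> 0"
    using a b f by auto
  ultimately show ?thesis
    using that by blast
qed

lemma ratfun_deriv_Fract:
  "q \<noteq> 0 \<Longrightarrow> ratfun_deriv (Fract p q) = Fract (pderiv p * q - p * pderiv q) (q * q)"
  by transfer simp

lemma ratfun_deriv_0 [simp]: "ratfun_deriv 0 = 0"
  using ratfun_deriv_Fract[of 1 0] by (simp add: fract_collapse)

lemma coeff_op_mult:
  fixes D :: "'a::comm_ring_1 \<Rightarrow> 'a"
  assumes "D 0 = 0" and "degree L \<le> N"
  shows "coeff (op_mult D L Q) k = (\<Sum>i\<le>N. \<Sum>l\<le>i. if i - l \<le> k then
           coeff L i * of_nat (i choose l) * (D ^^ l) (coeff Q (k - (i - l))) else 0)"
proof -
  have funpow_0: "(D ^^ l) 0 = 0" for l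
    using assms(1) by (induction l) simp_all
  have "coeff (smult (coeff L i * of_nat (i choose l)) (map_poly (D ^^ l) Q * monom 1 (i - l))) k
      = (if i - l \<le> k then coeff L i * of_nat (i choose l) * (D ^^ l) (coeff Q (k - (i - l)))
         else 0)" for i l
    by (simp add: mult.commute[of _ "monom 1 _"] coeff_monom_mult coeff_map_poly funpow_0)
  then have "coeff (op_mult D L Q) k = (\<Sum>i\<le>degree L. \<Sum>l\<le>i. if i - l \<le> k then
           coeff L i * of_nat (i choose l) * (D ^^ l) (coeff Q (k - (i - l))) else 0)"
    by (simp add: op_mult_def coeff_sum)
  also have "\<dots> = (\<Sum>i\<le>N. \<Sum>l\<le>i. if i - l \<le> k then
           coeff L i * of_nat (i choose l) * (D ^^ l) (coeff Q (k - (i - l))) else 0)"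
    using assms(2) by (intro sum.mono_neutral_left) (auto simp: coeff_eq_0 intro!: sum.neutral)
  finally show ?thesis .
qed

locale partial_diff_ring_hom =
  fixes S :: "'a::comm_ring_1 set" and h :: "'a \<Rightarrow> 'b::comm_ring_1"
    and D :: "'a \<Rightarrow> 'a" and D' :: "'b \<Rightarrow> 'b"
  assumes zero_mem: "0 \<in> S" and one_mem: "1 \<in> S"
    and add_mem: "x \<in> S \<Longrightarrow> y \<in> S \<Longrightarrow> x + y \<in> S"
    and mult_mem: "x \<in> S \<Longrightarrow> y \<in> S \<Longrightarrow> x * y \<in> S"
    and deriv_mem: "x \<in> S \<Longrightarrow> D x \<in> S"
    and hom_0: "h 0 = 0" and hom_1: "h 1 = 1"
    and hom_add: "x \<in> S \<Longrightarrow> y \<in> S \<Longrightarrow> h (x + y) = h x + h y"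
    and hom_mult: "x \<in> S \<Longrightarrow> y \<in> S \<Longrightarrow> h (x * y) = h x * h y"
    and hom_deriv: "x \<in> S \<Longrightarrow> h (D x) = D' (h x)"
    and deriv_0: "D 0 = 0"
begin

lemma deriv'_0: "D' 0 = 0"
  using hom_deriv[OF zero_mem] by (simp add: hom_0 deriv_0)

lemma of_nat_mem: "of_nat n \<in> S" and hom_of_nat: "h (of_nat n) = of_nat n"
  by (induction n) (simp_all add: zero_mem one_mem add_mem hom_0 hom_1 hom_add)

lemma funpow_deriv_mem: "x \<in> S \<Longrightarrow> (D ^^ l) x \<in> S"
  and hom_funpow_deriv: "x \<in> S \<Longrightarrow> h ((D ^^ l) x) = (D' ^^ l) (h x)"
  by (induction l) (simp_all add: deriv_mem hom_deriv)

lemma sum_mem: "(\<And>x. x \<in> A \<Longrightarrow> f x \<in> S) \<Longrightarrow> sum f A \<in> S"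
  and hom_sum: "(\<And>x. x \<in> A \<Longrightarrow> f x \<in> S) \<Longrightarrow> h (sum f A) = (\<Sum>x\<in>A. h (f x))"
  by (induction A rule: infinite_finite_induct) (simp_all add: zero_mem add_mem hom_0 hom_add)

lemma map_poly_op_mult:
  assumes L: "\<And>i. coeff L i \<in> S" and Q: "\<And>i. coeff Q i \<in> S"
  shows "map_poly h (op_mult D L Q) = op_mult D' (map_poly h L) (map_poly h Q)"
proof (rule poly_eqI)
  fix k
  define summand where "summand i l = (if i - l \<le> k then
      coeff L i * of_nat (i choose l) * (D ^^ l) (coeff Q (k - (i - l))) else 0)" for i l
  have summand_mem: "summand i l \<in> S" for i l
    by (simp add: summand_def zero_mem mult_mem L Q of_nat_mem funpow_deriv_mem)
  have hom_summand: "h (summand i l) = (if i - l \<le> k then coeff (map_poly h L) i * of_nat (i choose l)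
      * (D' ^^ l) (coeff (map_poly h Q) (k - (i - l))) else 0)" for i l
    by (simp add: summand_def hom_0 hom_mult mult_mem L Q of_nat_mem hom_of_nat funpow_deriv_mem
        hom_funpow_deriv coeff_map_poly)
  have "coeff (map_poly h (op_mult D L Q)) k = h (\<Sum>i\<le>degree L. \<Sum>l\<le>i. summand i l)"
    by (simp add: coeff_map_poly hom_0 coeff_op_mult[of D L "degree L", OF deriv_0 order_refl] summand_def)
  also have "\<dots> = coeff (op_mult D' (map_poly h L) (map_poly h Q)) k"
    by (simp add: hom_sum sum_mem summand_mem hom_summand
        coeff_op_mult[of D' "map_poly h L" "degree L", OF deriv'_0 map_poly_degree_leq])
  finally show "coeff (map_poly h (op_mult D L Q)) k
      = coeff (op_mult D' (map_poly h L) (map_poly h Q)) k" .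
qed

end

lemma map_poly_eval_mpoly_mult:
  "map_poly (eval_mpoly c) (p * q) = map_poly (eval_mpoly c) p * map_poly (eval_mpoly c) q"
  by (rule poly_eqI) (simp add: coeff_map_poly coeff_mult eval_mpoly_sum eval_mpoly_mult)

lemma map_poly_eval_mpoly_add:
  "map_poly (eval_mpoly c) (p + q) = map_poly (eval_mpoly c) p + map_poly (eval_mpoly c) q"
  by (rule poly_eqI) (simp add: coeff_map_poly eval_mpoly_add)

lemma map_poly_eval_mpoly_diff:
  "map_poly (eval_mpoly c) (p - q) = map_poly (eval_mpoly c) p - map_poly (eval_mpoly c) q"
  by (rule poly_eqI) (simp add: coeff_map_poly eval_mpoly_diff)

lemma map_poly_eval_mpoly_pderiv:
  "map_poly (eval_mpoly c) (pderiv p) = pderiv (map_poly (eval_mpoly c) p)"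
  by (rule poly_eqI) (simp add: coeff_map_poly coeff_pderiv eval_mpoly_add eval_mpoly_mult)

lemma map_poly_eval_mpoly_nonzero:
  "eval_mpoly c (lead_coeff p) \<noteq> 0 \<Longrightarrow> map_poly (eval_mpoly c) p \<noteq> 0"
  by (metis coeff_0 coeff_map_poly eval_mpoly_0)

text \<open>Substituting x := c is defined on the subring of K of fractions whose denominator survives
  the substitution; outside that subring the value of specialize is arbitrary.\<close>

definition specializable :: "('v::{finite,linorder} \<Rightarrow> 'k::field) \<Rightarrow> ('v, 'k) mpoly_field ratfun set"
  where "specializable c =
    {Fract (fract_poly a) (fract_poly b) | a b. map_poly (eval_mpoly c) b \<noteq> 0}"

definition specialize :: "('v::{finite,linorder} \<Rightarrow> 'k::field) \<Rightarrow> ('v, 'k) mpoly_field ratfun \<Rightarrow> 'k ratfun"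
  where "specialize c f = (SOME r. \<exists>a b. map_poly (eval_mpoly c) b \<noteq> 0 \<and>
    f = Fract (fract_poly a) (fract_poly b) \<and>
    r = Fract (map_poly (eval_mpoly c) a) (map_poly (eval_mpoly c) b))"

lemma Fract_in_specializable:
  "map_poly (eval_mpoly c) b \<noteq> 0 \<Longrightarrow> Fract (fract_poly a) (fract_poly b) \<in> specializable c"
  unfolding specializable_def by blast

lemma specializableE:
  assumes "f \<in> specializable c"
  obtains a b where "map_poly (eval_mpoly c) b \<noteq> 0" "f = Fract (fract_poly a) (fract_poly b)"
  using assms unfolding specializable_def by blast

lemma specialize_Fract:
  assumes b: "map_poly (eval_mpoly c) b \<noteq> 0"
  shows "specialize c (Fract (fract_poly a) (fract_poly b))
           = Fract (map_poly (eval_mpoly c) a) (map_poly (eval_mpoly c) b)"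
  unfolding specialize_def
proof (rule someI2, use b in blast)
  fix r
  assume "\<exists>a' b'. map_poly (eval_mpoly c) b' \<noteq> 0 \<and>
      Fract (fract_poly a) (fract_poly b) = Fract (fract_poly a') (fract_poly b') \<and>
      r = Fract (map_poly (eval_mpoly c) a') (map_poly (eval_mpoly c) b')"
  then obtain a' b' where b': "map_poly (eval_mpoly c) b' \<noteq> 0"
    and eq: "Fract (fract_poly a) (fract_poly b) = Fract (fract_poly a') (fract_poly b')"
    and r: "r = Fract (map_poly (eval_mpoly c) a') (map_poly (eval_mpoly c) b')"
    by blast
  from b b' have "b \<noteq> 0" "b' \<noteq> 0" by auto
  with eq have "a * b' = a' * b"
    by (simp add: eq_fract flip: fract_poly_mult)
  then have "map_poly (eval_mpoly c) a * map_poly (eval_mpoly c) b'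
      = map_poly (eval_mpoly c) a' * map_poly (eval_mpoly c) b"
    by (simp flip: map_poly_eval_mpoly_mult)
  with r b b' show "r = Fract (map_poly (eval_mpoly c) a) (map_poly (eval_mpoly c) b)"
    by (simp add: eq_fract)
qed

lemma specialize_add:
  assumes "f \<in> specializable c" "g \<in> specializable c"
  shows "f + g \<in> specializable c" "specialize c (f + g) = specialize c f + specialize c g"
proof -
  obtain a b where f: "map_poly (eval_mpoly c) b \<noteq> 0" "f = Fract (fract_poly a) (fract_poly b)"
    using assms(1) by (rule specializableE)
  obtain a' b' where g: "map_poly (eval_mpoly c) b' \<noteq> 0" "g = Fract (fract_poly a') (fract_poly b')"
    using assms(2) by (rule specializableE)
  have denom: "map_poly (eval_mpoly c) (b * b') \<noteq> 0"
    using f g by (simp add: map_poly_eval_mpoly_mult)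
  from f g have "b \<noteq> 0" "b' \<noteq> 0" by auto
  with f g have sum: "f + g = Fract (fract_poly (a * b' + a' * b)) (fract_poly (b * b'))"
    by simp
  show "f + g \<in> specializable c"
    unfolding sum by (rule Fract_in_specializable[OF denom])
  show "specialize c (f + g) = specialize c f + specialize c g"
    unfolding sum specialize_Fract[OF denom] using f g
    by (simp add: specialize_Fract map_poly_eval_mpoly_add map_poly_eval_mpoly_mult)
qed

lemma specialize_mult:
  assumes "f \<in> specializable c" "g \<in> specializable c"
  shows "f * g \<in> specializable c" "specialize c (f * g) = specialize c f * specialize c g"
proof -
  obtain a b where f: "map_poly (eval_mpoly c) b \<noteq> 0" "f = Fract (fract_poly a) (fract_poly b)"
    using assms(1) by (rule specializableE)
  obtain a' b' where g: "map_poly (eval_mpoly c) b' \<noteq> 0" "g = Fract (fract_poly a') (fract_poly b')"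
    using assms(2) by (rule specializableE)
  have denom: "map_poly (eval_mpoly c) (b * b') \<noteq> 0"
    using f g by (simp add: map_poly_eval_mpoly_mult)
  have prod: "f * g = Fract (fract_poly (a * a')) (fract_poly (b * b'))"
    using f g by simp
  show "f * g \<in> specializable c"
    unfolding prod by (rule Fract_in_specializable[OF denom])
  show "specialize c (f * g) = specialize c f * specialize c g"
    unfolding prod specialize_Fract[OF denom] using f g
    by (simp add: specialize_Fract map_poly_eval_mpoly_mult)
qed

lemma specialize_deriv:
  assumes "f \<in> specializable c"
  shows "ratfun_deriv f \<in> specializable c"
    "specialize c (ratfun_deriv f) = ratfun_deriv (specialize c f)"
proof -
  obtain a b where f: "map_poly (eval_mpoly c) b \<noteq> 0" "f = Fract (fract_poly a) (fract_poly b)"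
    using assms by (rule specializableE)
  have denom: "map_poly (eval_mpoly c) (b * b) \<noteq> 0"
    using f by (simp add: map_poly_eval_mpoly_mult)
  from f have "b \<noteq> 0" by auto
  have deriv: "ratfun_deriv f = Fract (fract_poly (pderiv a * b - a * pderiv b)) (fract_poly (b * b))"
    using f \<open>b \<noteq> 0\<close> by (simp add: ratfun_deriv_Fract fract_poly_pderiv)
  show "ratfun_deriv f \<in> specializable c"
    unfolding deriv by (rule Fract_in_specializable[OF denom])
  show "specialize c (ratfun_deriv f) = ratfun_deriv (specialize c f)"
    unfolding deriv specialize_Fract[OF denom] using f
    by (auto simp: specialize_Fract ratfun_deriv_Fract map_poly_eval_mpoly_diff
        map_poly_eval_mpoly_mult map_poly_eval_mpoly_pderiv)
qed

lemma specialize_0: "0 \<in> specializable c" "specialize c 0 = 0"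
  using Fract_in_specializable[of c 1 0] specialize_Fract[of c 1 0]
  by (simp_all add: fract_collapse)

lemma specialize_1: "1 \<in> specializable c" "specialize c 1 = 1"
  using Fract_in_specializable[of c 1 1] specialize_Fract[of c 1 1]
  by (simp_all add: fract_collapse)

lemma partial_diff_ring_hom_specialize:
  "partial_diff_ring_hom (specializable c) (specialize c) ratfun_deriv ratfun_deriv"
  by unfold_locales (simp_all add: specialize_0 specialize_1 specialize_add specialize_mult
      specialize_deriv)

lemma ex_specialization:
  fixes F :: "('v::{finite,linorder}, 'k::field) mpoly_field ratfun set"
  assumes "infinite (UNIV :: 'k set)" "finite F" "0 \<notin> F"
  obtains c where "F \<subseteq> specializable c" "\<forall>f\<in>F. specialize c f \<noteq> 0"
proof -
  have "\<forall>f :: ('v, 'k) mpoly_field ratfun. \<exists>a b. b \<noteq> 0 \<and> f = Fract (fract_poly a) (fract_poly b)"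
    by (metis fract_fract_poly_cases)
  then obtain num den where rep: "\<And>f :: ('v, 'k) mpoly_field ratfun. den f \<noteq> 0"
    "\<And>f. f = Fract (fract_poly (num f)) (fract_poly (den f))"
    unfolding choice_iff by blast
  have num: "num f \<noteq> 0" if "f \<in> F" for f
    using rep that assms(3) by (metis Fract_eq_0_iff fract_poly_0 fract_poly_eq_0_iff)
  define W where "W = (\<Prod>f\<in>F. lead_coeff (num f) * lead_coeff (den f))"
  have "W \<noteq> 0"
    using assms(2) num rep(1) by (simp add: W_def)
  then obtain c where "eval_mpoly c W \<noteq> 0"
    using eval_mpoly_nonzero_somewhere[OF assms(1)] by blast
  then have nonzero:
      "eval_mpoly c (lead_coeff (num f)) \<noteq> 0" "eval_mpoly c (lead_coeff (den f)) \<noteq> 0"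
    if "f \<in> F" for f
    using assms(2) that by (auto simp: W_def eval_mpoly_prod eval_mpoly_mult)
  show ?thesis
  proof
    show "F \<subseteq> specializable c"
      using nonzero rep(2) by (metis subsetI Fract_in_specializable map_poly_eval_mpoly_nonzero)
    show "\<forall>f\<in>F. specialize c f \<noteq> 0"
    proof
      fix f assume "f \<in> F"
      with nonzero map_poly_eval_mpoly_nonzero
      have "map_poly (eval_mpoly c) (num f) \<noteq> 0" "map_poly (eval_mpoly c) (den f) \<noteq> 0"
        by auto
      then show "specialize c f \<noteq> 0"
        by (subst rep(2)) (simp add: specialize_Fract Fract_eq_0_iff)
    qed
  qed
qed

lemma embed_ratfun_cases:
  obtains a b where "b \<noteq> 0" "r = Fract a b"
    "(embed_ratfun r :: ('v::linorder, 'k::field) mpoly_field ratfun)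
       = Fract (map_poly const_mpf a) (map_poly const_mpf b)"
proof -
  obtain a b where ab: "(SOME (a, b). b \<noteq> 0 \<and> r = Fract a b) = (a, b)"
    by (metis surj_pair)
  have "\<exists>ab. case ab of (a, b) \<Rightarrow> b \<noteq> 0 \<and> r = Fract a b"
    by (cases r) auto
  from someI_ex[OF this] have "b \<noteq> 0 \<and> r = Fract a b"
    unfolding ab by simp
  with that show ?thesis
    unfolding embed_ratfun_def ab by auto
qed

lemma map_poly_const_mpf:
  "map_poly const_mpf p = fract_poly (map_poly (Poly_Mapping.single 0) p)"
  by (rule poly_eqI) (simp add: coeff_map_poly const_mpf_def to_fract_def fract_collapse)

lemma map_poly_eval_mpoly_const:
  "map_poly (eval_mpoly c) (map_poly (Poly_Mapping.single 0) p) = p"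
  by (simp add: map_poly_map_poly o_def)

lemma specialize_embed_ratfun:
  fixes c :: "'v::{finite,linorder} \<Rightarrow> 'k::field"
  shows "embed_ratfun r \<in> specializable c" "specialize c (embed_ratfun r) = r"
proof -
  obtain a b where ab: "b \<noteq> 0" "r = Fract a b"
    "(embed_ratfun r :: ('v, 'k) mpoly_field ratfun)
       = Fract (map_poly const_mpf a) (map_poly const_mpf b)"
    by (rule embed_ratfun_cases)
  then have b: "map_poly (eval_mpoly c) (map_poly (Poly_Mapping.single 0) b) \<noteq> 0"
    by (simp add: map_poly_eval_mpoly_const)
  have embed: "(embed_ratfun r :: ('v, 'k) mpoly_field ratfun)
      = Fract (fract_poly (map_poly (Poly_Mapping.single 0) a))
              (fract_poly (map_poly (Poly_Mapping.single 0) b))"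
    using ab(3) by (simp add: map_poly_const_mpf)
  show "embed_ratfun r \<in> specializable c"
    unfolding embed by (rule Fract_in_specializable[OF b])
  show "specialize c (embed_ratfun r) = r"
    unfolding embed specialize_Fract[OF b] by (simp add: map_poly_eval_mpoly_const ab(2))
qed

lemma embed_ratfun_0 [simp]:
  "(embed_ratfun 0 :: ('v::linorder, 'k::field) mpoly_field ratfun) = 0"
proof -
  obtain a b where ab: "b \<noteq> 0" "0 = Fract a b"
    "(embed_ratfun 0 :: ('v, 'k) mpoly_field ratfun)
       = Fract (map_poly const_mpf a) (map_poly const_mpf b)"
    by (rule embed_ratfun_cases)
  then have "a = 0"
    by (simp add: Fract_eq_0_iff)
  with ab(3) show ?thesis
    by (simp add: fract_collapse)
qed

lemma embed_ratfun_eq_0_iff: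
  "(embed_ratfun r :: ('v::{finite,linorder}, 'k::field) mpoly_field ratfun) = 0 \<longleftrightarrow> r = 0"
  by (metis embed_ratfun_0 specialize_embed_ratfun(2))

lemma degree_map_poly_embed_ratfun:
  "degree (map_poly embed_ratfun P :: ('v::{finite,linorder}, 'k::field) mpoly_field ratfun poly)
     = degree P"
  by (cases "P = 0") (simp_all add: map_poly_degree_eq embed_ratfun_eq_0_iff)

lemma map_poly_specialize_embed_ratfun:
  "map_poly (specialize c) (map_poly embed_ratfun P) = P"
  by (simp add: map_poly_map_poly specialize_0 o_def specialize_embed_ratfun)

lemma right_factor_specialize:
  fixes P :: "'k::field ratfun poly" and Q :: "('v::{finite,linorder}, 'k) mpoly_field ratfun poly"
  assumes "infinite (UNIV :: 'k set)" and "right_factor ratfun_deriv Q (map_poly embed_ratfun P)"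
  obtains Q' where "degree Q' = degree Q" "right_factor ratfun_deriv Q' P"
proof -
  obtain L where L: "map_poly embed_ratfun P = op_mult ratfun_deriv L Q"
    using assms(2) unfolding right_factor_def by blast
  define F where "F = (coeff L ` {..degree L} \<union> coeff Q ` {..degree Q}) - {0}"
  obtain c where c: "F \<subseteq> specializable c" "\<forall>f\<in>F. specialize c f \<noteq> 0"
    using ex_specialization[OF assms(1), of F] unfolding F_def by blast
  interpret partial_diff_ring_hom "specializable c" "specialize c" ratfun_deriv ratfun_deriv
    by (rule partial_diff_ring_hom_specialize)
  have "coeff R i \<in> specializable c" if "R \<in> {L, Q}" for R i
    using c(1) zero_mem le_degree[of R i] that by (cases "coeff R i = 0") (auto simp: F_def)
  then have coeff_mem: "coeff L i \<in> specializable c" "coeff Q i \<in> specializable c" for i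
    by simp_all
  have "P = op_mult ratfun_deriv (map_poly (specialize c) L) (map_poly (specialize c) Q)"
    using map_poly_op_mult[OF coeff_mem] L by (metis map_poly_specialize_embed_ratfun)
  moreover have "degree (map_poly (specialize c) Q) = degree Q"
  proof (cases "Q = 0")
    case False
    then have "lead_coeff Q \<in> F" by (simp add: F_def)
    with c(2) show ?thesis by (simp add: map_poly_degree_eq)
  qed simp
  ultimately show ?thesis
    using that unfolding right_factor_def by blast
qed

theorem mainTheorem12:
  fixes P :: "'k::field_char_0 ratfun poly"
  assumes "alg_closed TYPE('k)"
    and "irreducible_op ratfun_deriv P"
  shows "irreducible_op (ratfun_deriv :: ('v::{finite,linorder}, 'k) mpoly_field ratfun \<Rightarrow> _)
           (map_poly embed_ratfun P)"
proof -
  let ?PK = "map_poly embed_ratfun P :: ('v, 'k) mpoly_field ratfun poly"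
  have deg: "degree ?PK = degree P"
    by (rule degree_map_poly_embed_ratfun)
  have "\<not> right_factor ratfun_deriv Q ?PK" if "1 \<le> degree Q" "degree Q < degree ?PK" for Q
  proof
    assume "right_factor ratfun_deriv Q ?PK"
    then obtain Q' where "degree Q' = degree Q" "right_factor ratfun_deriv Q' P"
      by (rule right_factor_specialize[OF infinite_UNIV_char_0])
    with that deg assms(2) show False
      unfolding irreducible_op_def by auto
  qed
  with assms(2) deg show ?thesis
    unfolding irreducible_op_def by auto
qed

end
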